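(* Let $\mathscr Q_n$ be a non-singular quadric in $\mathrm{PG}(n,2)$ of projective index $g\geq1$, let $\Gamma$ be its point-graph, and for $0\le s<g$ let $\Gamma_s$ be the graph constructed from an $s$-dimensional subspace $\alpha_s$ contained in $\mathscr Q_n$ as described below. Then $\Gamma_s$ is isomorphic to $\Gamma$ if and only if $s=0$.
   Context: A non-singular quadric $\mathscr Q_n$ in $\mathrm{PG}(n,2)$ is the point set of a non-degenerate quadric; its projective index $g$ is the largest dimension of a projective subspace contained in $\mathscr Q_n$. The point-graph $\Gamma$ has vertex set the points of $\mathscr Q_n$, two distinct points adjacent iff the line joining them is contained in $\mathscr Q_n$. For $0\le s<g$ and an $s$-dimensional subspace $\alpha_s\subseteq\mathscr Q_n$: a point $X$ of $\mathscr Q_n$ has type (i) if $X\in\alpha_s$; type (ii) if $X\notin\alpha_s$ and $\langle\alpha_s,X\rangle\subseteq\mathscr Q_n$; type (iii) otherwise. Let $\mathcal X_s$ be the type (ii) points and $\mathcal Y_s$ the points of type (i) or (iii). The graph $\Gamma_s$ has the same vertex set as $\Gamma$ and the same edges, except that for each vertex $R\in\mathcal Y_s$ having exactly $\frac12|\mathcal X_s|$ neighbours in $\mathcal X_s$ (in $\Gamma$), those edges are deleted and $R$ is joined instead to the other $\frac12|\mathcal X_s|$ vertices of $\mathcal X_s$. *)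

theory Defs
  imports Main "HOL-Library.Z2"
begin

(* Vectors of GF(2)^{n+1}: functions nat => bit supported on {0..n}.
   Over GF(2) each point of PG(n,2) has exactly one nonzero representative. *)
definition vecs :: "nat \<Rightarrow> (nat \<Rightarrow> bit) set" where
  "vecs n = {x. \<forall>i>n. x i = 0}"

definition pg_points :: "nat \<Rightarrow> (nat \<Rightarrow> bit) set" where
  "pg_points n = {x \<in> vecs n. x \<noteq> (\<lambda>_. 0)}"

definition vadd :: "(nat \<Rightarrow> bit) \<Rightarrow> (nat \<Rightarrow> bit) \<Rightarrow> (nat \<Rightarrow> bit)" where
  "vadd x y = (\<lambda>i. x i + y i)"

definition qform :: "nat \<Rightarrow> (nat \<Rightarrow> nat \<Rightarrow> bit) \<Rightarrow> (nat \<Rightarrow> bit) \<Rightarrow> bit" where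
  "qform n a x = (\<Sum>i\<in>{0..n}. \<Sum>j\<in>{i..n}. a i j * x i * x j)"

definition bform :: "nat \<Rightarrow> (nat \<Rightarrow> nat \<Rightarrow> bit) \<Rightarrow> (nat \<Rightarrow> bit) \<Rightarrow> (nat \<Rightarrow> bit) \<Rightarrow> bit" where
  "bform n a x y = qform n a (vadd x y) - qform n a x - qform n a y"

definition quadric :: "nat \<Rightarrow> (nat \<Rightarrow> nat \<Rightarrow> bit) \<Rightarrow> (nat \<Rightarrow> bit) set" where
  "quadric n a = {x \<in> pg_points n. qform n a x = 0}"

definition nonsingular :: "nat \<Rightarrow> (nat \<Rightarrow> nat \<Rightarrow> bit) \<Rightarrow> bool" where
  "nonsingular n a \<longleftrightarrow>
     \<not> (\<exists>v \<in> pg_points n. qform n a v = 0 \<and> (\<forall>w \<in> vecs n. bform n a v w = 0))"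

(* projective subspace of PG(n,2): nonempty set of points closed under sums of distinct points
   (i.e. the nonzero vectors of a nonzero linear subspace) *)
definition proj_subspace :: "nat \<Rightarrow> (nat \<Rightarrow> bit) set \<Rightarrow> bool" where
  "proj_subspace n S \<longleftrightarrow> S \<subseteq> pg_points n \<and> S \<noteq> {} \<and>
     (\<forall>x\<in>S. \<forall>y\<in>S. x \<noteq> y \<longrightarrow> vadd x y \<in> S)"

definition subspace_of_dim :: "nat \<Rightarrow> nat \<Rightarrow> (nat \<Rightarrow> bit) set \<Rightarrow> bool" where
  "subspace_of_dim n d S \<longleftrightarrow> proj_subspace n S \<and> card S = 2 ^ (d + 1) - 1"

definition proj_index :: "nat \<Rightarrow> (nat \<Rightarrow> nat \<Rightarrow> bit) \<Rightarrow> nat" where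
  "proj_index n a = (GREATEST d. \<exists>S. subspace_of_dim n d S \<and> S \<subseteq> quadric n a)"

(* point-graph adjacency: distinct points whose joining line {P,R,P+R} lies on the quadric *)
definition qadj :: "nat \<Rightarrow> (nat \<Rightarrow> nat \<Rightarrow> bit) \<Rightarrow> (nat \<Rightarrow> bit) \<Rightarrow> (nat \<Rightarrow> bit) \<Rightarrow> bool" where
  "qadj n a P R \<longleftrightarrow> P \<in> quadric n a \<and> R \<in> quadric n a \<and> P \<noteq> R \<and>
     {P, R, vadd P R} \<subseteq> quadric n a"

(* the subspace <alpha, X> spanned by alpha and the point X *)
definition join_pt :: "(nat \<Rightarrow> bit) set \<Rightarrow> (nat \<Rightarrow> bit) \<Rightarrow> (nat \<Rightarrow> bit) set" where
  "join_pt S X = S \<union> {X} \<union> (\<lambda>s. vadd X s) ` S"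

(* type (ii) points *)
definition typeX :: "nat \<Rightarrow> (nat \<Rightarrow> nat \<Rightarrow> bit) \<Rightarrow> (nat \<Rightarrow> bit) set \<Rightarrow> (nat \<Rightarrow> bit) set" where
  "typeX n a S = {X \<in> quadric n a. X \<notin> S \<and> join_pt S X \<subseteq> quadric n a}"

(* type (i) or (iii) points *)
definition typeY :: "nat \<Rightarrow> (nat \<Rightarrow> nat \<Rightarrow> bit) \<Rightarrow> (nat \<Rightarrow> bit) set \<Rightarrow> (nat \<Rightarrow> bit) set" where
  "typeY n a S = quadric n a - typeX n a S"

definition switched :: "nat \<Rightarrow> (nat \<Rightarrow> nat \<Rightarrow> bit) \<Rightarrow> (nat \<Rightarrow> bit) set \<Rightarrow> (nat \<Rightarrow> bit) \<Rightarrow> bool" where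
  "switched n a S R \<longleftrightarrow> R \<in> typeY n a S \<and>
     2 * card {X \<in> typeX n a S. qadj n a R X} = card (typeX n a S)"

definition adj_s :: "nat \<Rightarrow> (nat \<Rightarrow> nat \<Rightarrow> bit) \<Rightarrow> (nat \<Rightarrow> bit) set \<Rightarrow> (nat \<Rightarrow> bit) \<Rightarrow> (nat \<Rightarrow> bit) \<Rightarrow> bool" where
  "adj_s n a S u v =
    (if switched n a S u \<and> v \<in> typeX n a S then \<not> qadj n a u v
     else if switched n a S v \<and> u \<in> typeX n a S then \<not> qadj n a u v
     else qadj n a u v)"

definition graph_iso :: "'v set \<Rightarrow> ('v \<Rightarrow> 'v \<Rightarrow> bool) \<Rightarrow> 'w set \<Rightarrow> ('w \<Rightarrow> 'w \<Rightarrow> bool) \<Rightarrow> bool" where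
  "graph_iso V E W F \<longleftrightarrow> (\<exists>f. bij_betw f V W \<and> (\<forall>u\<in>V. \<forall>v\<in>V. E u v \<longleftrightarrow> F (f u) (f v)))"

end

theory Submission
  imports Defs "HOL-Library.Function_Algebras"
begin

text \<open>Write \<open>B\<close> for the polar form. A vertex \<open>R\<close> of type (i) or (iii) has exactly half of
  \<open>\<X>\<^sub>s\<close> as neighbours iff \<open>R\<close> is not orthogonal to \<open>\<alpha>\<^sub>s\<close>: translation by a point \<open>t \<in> \<alpha>\<^sub>s\<close>
  with \<open>B(R,t) = 1\<close> permutes \<open>\<X>\<^sub>s\<close> and exchanges the neighbours of \<open>R\<close> in \<open>\<X>\<^sub>s\<close> with its
  non-neighbours. Hence for \<open>\<alpha>\<^sub>0 = {P}\<close>, translating \<open>\<X>\<^sub>0\<close> by \<open>P\<close> is an isomorphism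
  \<open>\<Gamma>\<^sub>0 \<cong> \<Gamma>\<close>. Conversely, \<open>\<Gamma>\<close> has the one-or-all property of polar spaces (every edge lies in a
  line \<open>{u, v, u + v}\<close> and every other point is collinear with one or all of its points), which
  is invariant under isomorphism. For \<open>s \<ge> 1\<close> it fails in \<open>\<Gamma>\<^sub>s\<close> at an edge between a point of
  \<open>\<X>\<^sub>s\<close> and a suitable switched vertex; the witnesses are points of the quadric with
  prescribed polar values on two or three orthogonal points, which exist by nonsingularity.
  Finally \<open>\<X>\<^sub>s \<noteq> {}\<close> because a singular subspace of dimension \<open>g > s\<close> contains a point
  outside \<open>\<alpha>\<^sub>s\<close> orthogonal to \<open>\<alpha>\<^sub>s\<close>.\<close>

declare add_bit_eq_xor [simp del] mult_bit_eq_and [simp del]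

lemma finite_UNIV_bit: "finite (UNIV :: bit set)"
proof -
  have "UNIV = {0::bit, 1}"
    by (auto intro: bit.exhaust)
  then show ?thesis
    by (metis finite.emptyI finite_insert)
qed

subsection \<open>Vectors and the polar form\<close>

lemma zero_vec_eq [simp]: "(\<lambda>_. 0 :: bit) = 0"
  by (simp add: zero_fun_def)

lemma vadd_eq_plus [simp]: "vadd x y = x + y"
  by (simp add: vadd_def plus_fun_def)

text \<open>\<open>Function_Algebras\<close> makes \<open>nat \<Rightarrow> bit\<close> a ring, so the simplifier collects \<open>x + x\<close> into
  \<open>2 * x\<close>.\<close>

lemma vec_numeral_two [simp]: "(2 :: nat \<Rightarrow> bit) = 0"
  by (simp add: fun_eq_iff numeral_eq_Suc)

lemma vec_add_self [simp]: "(x :: nat \<Rightarrow> bit) + x = 0"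
  by (simp add: fun_eq_iff)

lemma vec_add_self_left [simp]: "(x :: nat \<Rightarrow> bit) + (x + y) = y"
  by (simp add: fun_eq_iff)

lemma vec_add_eq_0_iff [simp]: "(x :: nat \<Rightarrow> bit) + y = 0 \<longleftrightarrow> x = y"
  by (metis vec_add_self vec_add_self_left)

lemma zero_in_vecs [simp]: "0 \<in> vecs n"
  by (simp add: vecs_def)

lemma add_in_vecs [simp]: "x \<in> vecs n \<Longrightarrow> y \<in> vecs n \<Longrightarrow> x + y \<in> vecs n"
  by (simp add: vecs_def)

lemma finite_vecs: "finite (vecs n)"
proof -
  have "vecs n = {f. \<forall>i. (i \<in> {..n} \<longrightarrow> f i \<in> UNIV) \<and> (i \<notin> {..n} \<longrightarrow> f i = 0)}"
    by (auto simp: vecs_def)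
  then show ?thesis
    using finite_set_of_finite_funs[OF finite_atMost finite_UNIV_bit] by simp
qed

lemma bform_eq_sum:
  "bform n a x y = (\<Sum>i\<in>{0..n}. \<Sum>j\<in>{i..n}. a i j * (x i * y j + y i * x j))"
proof -
  have "bform n a x y = (\<Sum>i\<in>{0..n}. \<Sum>j\<in>{i..n}.
      a i j * (x i + y i) * (x j + y j) + a i j * x i * x j + a i j * y i * y j)"
    by (simp add: bform_def qform_def sum.distrib)
  also have "\<dots> = (\<Sum>i\<in>{0..n}. \<Sum>j\<in>{i..n}. a i j * (x i * y j + y i * x j))"
    by (intro sum.cong refl)
      (simp add: algebra_simps)
  finally show ?thesis .
qed

lemma bform_add_right: "bform n a x (y + z) = bform n a x y + bform n a x z"
  by (simp add: bform_eq_sum sum.distrib[symmetric] algebra_simps)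

lemma bform_commute: "bform n a x y = bform n a y x"
  by (simp add: bform_eq_sum add.commute mult.commute)

lemma bform_add_left: "bform n a (y + z) x = bform n a y x + bform n a z x"
  by (metis bform_add_right bform_commute)

lemma bform_self [simp]: "bform n a x x = 0"
  by (simp add: bform_eq_sum)

lemma bform_zero_left [simp]: "bform n a 0 x = 0"
  by (simp add: bform_eq_sum)

lemma bform_zero_right [simp]: "bform n a x 0 = 0"
  by (simp add: bform_eq_sum)

lemma qform_add: "qform n a (x + y) = qform n a x + qform n a y + bform n a x y"
proof -
  have "r = p + q + (r - p - q)" for p q r :: bit
    by (cases p; cases q; cases r) simp_all
  then show ?thesis
    by (metis bform_def vadd_eq_plus)
qed

lemma quadric_iff: "x \<in> quadric n a \<longleftrightarrow> x \<in> vecs n \<and> x \<noteq> 0 \<and> qform n a x = 0"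
  by (auto simp: quadric_def pg_points_def)

lemma qadj_iff:
  "P \<in> quadric n a \<Longrightarrow> R \<in> quadric n a \<Longrightarrow> qadj n a P R \<longleftrightarrow> P \<noteq> R \<and> bform n a P R = 0"
  by (auto simp: qadj_def quadric_iff qform_add)

lemma add_in_quadric:
  "P \<in> quadric n a \<Longrightarrow> R \<in> quadric n a \<Longrightarrow> P \<noteq> R \<Longrightarrow> bform n a P R = 0 \<Longrightarrow> P + R \<in> quadric n a"
  by (auto simp: quadric_iff qform_add)

lemma nonsingular_bform_witness:
  "nonsingular n a \<Longrightarrow> P \<in> quadric n a \<Longrightarrow> \<exists>w\<in>vecs n. bform n a P w = 1"
  by (auto simp: nonsingular_def quadric_def)

subsection \<open>Prescribing polar values\<close>

lemma exists_vec_bform_values2: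
  assumes ns: "nonsingular n a" and p: "p \<in> quadric n a" and q: "q \<in> quadric n a"
    and pq: "p \<noteq> q" and bpq: "bform n a p q = 0"
  shows "\<exists>y\<in>vecs n. bform n a y p = c1 \<and> bform n a y q = c2"
proof -
  obtain y1 where y1: "y1 \<in> vecs n" "bform n a y1 p = 1"
    using nonsingular_bform_witness[OF ns p] bform_commute by metis
  obtain y2 where y2: "y2 \<in> vecs n" "bform n a y2 q = 1"
    using nonsingular_bform_witness[OF ns q] bform_commute by metis
  obtain y3 where y3: "y3 \<in> vecs n" "bform n a y3 (p + q) = 1"
    using nonsingular_bform_witness[OF ns add_in_quadric[OF p q pq bpq]] bform_commute by metis
  have "bform n a y3 q = 1 + bform n a y3 p"
    using y3(2) by (cases "bform n a y3 p"; cases "bform n a y3 q") (simp_all add: bform_add_right)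
  \<comment> \<open>the eight sums of \<open>y1, y2, y3\<close> realise every pair of values\<close>
  then have "\<exists>y\<in>{0, y1, y2, y3, y1 + y2, y1 + y3, y2 + y3, y1 + y2 + y3}.
      bform n a y p = c1 \<and> bform n a y q = c2"
    using y1(2) y2(2)
    by (cases "bform n a y1 q"; cases "bform n a y2 p"; cases "bform n a y3 p"; cases c1; cases c2)
      (simp_all add: bform_add_left)
  moreover have "{0, y1, y2, y3, y1 + y2, y1 + y3, y2 + y3, y1 + y2 + y3} \<subseteq> vecs n"
    using y1 y2 y3 by simp
  ultimately show ?thesis
    by blast
qed

text \<open>Adding \<open>p\<close> to a vector \<open>y\<close> with \<open>B(y,p) = 1\<close> flips \<open>Q(y)\<close> and does not change \<open>B(y,\<cdot>)\<close>
  on \<open>p\<^sup>\<bottom>\<close>.\<close>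

lemma exists_quadric_point_same_bform:
  assumes y: "y \<in> vecs n" and p: "p \<in> quadric n a" and byp: "bform n a y p = 1"
  shows "\<exists>z\<in>quadric n a. \<forall>v. bform n a v p = 0 \<longrightarrow> bform n a z v = bform n a y v"
proof (cases "qform n a y = 0")
  case True
  moreover have "y \<noteq> 0"
    using byp by auto
  ultimately show ?thesis
    using y by (auto simp: quadric_iff)
next
  case False
  then have "y + p \<in> quadric n a"
    using y p byp by (auto simp: quadric_iff qform_add)
  moreover have "\<forall>v. bform n a v p = 0 \<longrightarrow> bform n a (y + p) v = bform n a y v"
    by (metis add.right_neutral bform_add_left bform_commute)
  ultimately show ?thesis
    by blast
qed

lemma exists_quadric_point_bform_one_value:
  assumes ns: "nonsingular n a" and p: "p \<in> quadric n a" and q: "q \<in> quadric n a"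
    and pq: "p \<noteq> q" and bpq: "bform n a p q = 0"
  shows "\<exists>z\<in>quadric n a. bform n a z p = 1 \<and> bform n a z q = c"
proof -
  obtain y where y: "y \<in> vecs n" "bform n a y p = 1" "bform n a y q = c"
    using exists_vec_bform_values2[OF ns p q pq bpq] by blast
  obtain z where "z \<in> quadric n a" "\<forall>v. bform n a v p = 0 \<longrightarrow> bform n a z v = bform n a y v"
    using exists_quadric_point_same_bform[OF y(1) p] y(2) by blast
  then show ?thesis
    using y bpq by (metis bform_commute bform_self)
qed

lemma exists_quadric_point_bform_ones3:
  assumes ns: "nonsingular n a" and p: "p \<in> quadric n a" and x: "x \<in> quadric n a"
    and e: "e \<in> quadric n a" and xe: "x \<noteq> e" "bform n a x e = 0"
    and p_off_line: "p \<noteq> x + e" and bpx: "bform n a p x = 0" and bpe: "bform n a p e = 0"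
  shows "\<exists>z\<in>quadric n a. bform n a z p = 1 \<and> bform n a z x = 1 \<and> bform n a z e = 1"
proof -
  obtain y where y: "y \<in> vecs n" "bform n a y p = 1" "bform n a y (x + e) = 0"
    using exists_vec_bform_values2[OF ns p add_in_quadric[OF x e xe] p_off_line] bpx bpe
    by (auto simp: bform_add_right)
  obtain y' where y': "y' \<in> vecs n" "bform n a y' x = 1" "bform n a y' e = 1"
    using exists_vec_bform_values2[OF ns x e xe] by blast
  have yxe: "bform n a y x = bform n a y e"
    using y(3) by (cases "bform n a y x"; cases "bform n a y e") (simp_all add: bform_add_right)
  have "\<exists>w\<in>vecs n. bform n a w p = 1 \<and> bform n a w x = 1 \<and> bform n a w e = 1"
  proof (cases "bform n a y x = 1 \<or> bform n a y' p = 1")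
    case True
    then show ?thesis
      using y y' yxe by metis
  next
    case False
    then show ?thesis
      using y y' yxe by (auto intro!: bexI[of _ "y + y'"] simp: bform_add_left)
  qed
  then obtain w where w: "w \<in> vecs n" "bform n a w p = 1" "bform n a w x = 1" "bform n a w e = 1"
    by blast
  obtain z where "z \<in> quadric n a" "\<forall>v. bform n a v p = 0 \<longrightarrow> bform n a z v = bform n a w v"
    using exists_quadric_point_same_bform[OF w(1) p w(2)] by blast
  then show ?thesis
    using w bpx bpe by (metis bform_commute bform_self)
qed

subsection \<open>Singular subspaces and points of type (ii)\<close>

definition vsubgroup :: "(nat \<Rightarrow> bit) set \<Rightarrow> bool" where
  "vsubgroup H \<longleftrightarrow> 0 \<in> H \<and> (\<forall>x\<in>H. \<forall>y\<in>H. x + y \<in> H)"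

definition perp_in :: "nat \<Rightarrow> (nat \<Rightarrow> nat \<Rightarrow> bit) \<Rightarrow> (nat \<Rightarrow> bit) set \<Rightarrow> (nat \<Rightarrow> bit) set
    \<Rightarrow> (nat \<Rightarrow> bit) set" where
  "perp_in n a M T = {m\<in>M. \<forall>t\<in>T. bform n a m t = 0}"

lemma proj_subspace_zero_notin: "proj_subspace n S \<Longrightarrow> 0 \<notin> S"
  by (auto simp: proj_subspace_def pg_points_def)

lemma proj_subspace_finite: "proj_subspace n S \<Longrightarrow> finite S"
  by (rule finite_subset[OF _ finite_vecs]) (auto simp: proj_subspace_def pg_points_def)

lemma proj_subspace_vsubgroup: "proj_subspace n S \<Longrightarrow> vsubgroup (insert 0 S)"
  by (auto simp: proj_subspace_def vsubgroup_def)

lemma proj_subspace_add: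
  "proj_subspace n S \<Longrightarrow> x \<in> S \<Longrightarrow> y \<in> S \<Longrightarrow> x \<noteq> y \<Longrightarrow> x + y \<in> S"
  by (auto simp: proj_subspace_def)

lemma card_insert_zero_subspace: "subspace_of_dim n d S \<Longrightarrow> card (insert 0 S) = 2 ^ (d + 1)"
  using proj_subspace_zero_notin proj_subspace_finite
  by (auto simp: subspace_of_dim_def card_insert_if)

lemma bform_singular_subspace:
  assumes S: "proj_subspace n S" "S \<subseteq> quadric n a" and x: "x \<in> insert 0 S" and y: "y \<in> insert 0 S"
  shows "bform n a x y = 0"
proof (cases "x = 0 \<or> y = 0 \<or> x = y")
  case False
  then have "x \<in> quadric n a" "y \<in> quadric n a" "x + y \<in> quadric n a"
    using x y proj_subspace_add[OF S(1)] S(2) by auto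
  then show ?thesis
    by (simp add: quadric_iff qform_add)
qed auto

lemma card_le_twice_card_perp:
  assumes fin: "finite H" and H: "vsubgroup H"
  shows "card H \<le> 2 * card {h\<in>H. bform n a h v = 0}"
proof (cases "\<exists>h0\<in>H. bform n a h0 v = 1")
  case False
  then have "{h\<in>H. bform n a h v = 0} = H"
    by auto
  then show ?thesis
    by simp
next
  case True
  then obtain h0 where h0: "h0 \<in> H" "bform n a h0 v = 1"
    by blast
  let ?H0 = "{h\<in>H. bform n a h v = 0}" and ?H1 = "{h\<in>H. bform n a h v = 1}"
  have "?H1 \<subseteq> (+) h0 ` ?H0"
  proof
    fix h
    assume h: "h \<in> ?H1"
    have "h0 + h \<in> H"
      using H h0(1) h unfolding vsubgroup_def by blast
    then have "h0 + h \<in> ?H0"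
      using h h0(2) by (simp add: bform_add_left)
    then show "h \<in> (+) h0 ` ?H0"
      by (rule rev_image_eqI) simp
  qed
  moreover have fin0: "finite ?H0"
    using fin by simp
  ultimately have "card ?H1 \<le> card ((+) h0 ` ?H0)"
    by (simp add: card_mono)
  also have "\<dots> \<le> card ?H0"
    using fin0 by (rule card_image_le)
  finally have "card ?H1 \<le> card ?H0" .
  moreover have "card ?H0 + card ?H1 = card H"
    using fin by (subst card_Un_disjoint[symmetric]) (auto intro!: arg_cong[where f = card])
  ultimately show ?thesis
    by simp
qed

lemma vsubgroup_extend:
  assumes "vsubgroup T"
  shows "vsubgroup (T \<union> (+) v ` T)"
  using assms unfolding vsubgroup_def
  by (auto simp: algebra_simps intro: image_eqI[where x = "_ + _"])

lemma card_vsubgroup_extend: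
  assumes fin: "finite T" and T: "vsubgroup T" and v: "v \<notin> T"
  shows "card (T \<union> (+) v ` T) = 2 * card T"
proof -
  have "T \<inter> (+) v ` T = {}"
  proof (rule ccontr)
    assume "T \<inter> (+) v ` T \<noteq> {}"
    then obtain t where "t \<in> T" "v + t \<in> T"
      by auto
    then have "v + t + t \<in> T"
      using T unfolding vsubgroup_def by blast
    then show False
      using v by simp
  qed
  moreover have "card ((+) v ` T) = card T"
    by (rule card_image) (simp add: inj_on_def)
  ultimately show ?thesis
    using fin by (simp add: card_Un_disjoint)
qed

text \<open>Enlarging \<open>T\<close> by one generator at most halves \<open>perp_in M T\<close> while doubling \<open>T\<close>.\<close>

lemma card_perp_in_mult_mono:
  assumes "finite A" "vsubgroup A" "finite M" "vsubgroup M" "vsubgroup T" "T \<subseteq> A"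
  shows "card (perp_in n a M T) * card T \<le> card (perp_in n a M A) * card A"
  using assms(5,6)
proof (induction "card A - card T" arbitrary: T rule: less_induct)
  case less
  show ?case
  proof (cases "T = A")
    case False
    then obtain v where v: "v \<in> A" "v \<notin> T"
      using less.prems by blast
    define T' where "T' = T \<union> (+) v ` T"
    have finT: "finite T"
      using less.prems assms(1) finite_subset by blast
    have card_T': "card T' = 2 * card T"
      unfolding T'_def using card_vsubgroup_extend[OF finT less.prems(1) v(2)] .
    have T': "vsubgroup T'" "T' \<subseteq> A"
      unfolding T'_def using vsubgroup_extend[OF less.prems(1)] less.prems assms(2) v
      by (auto simp: vsubgroup_def)
    have "card T > 0"
      using finT less.prems(1) by (auto simp: vsubgroup_def card_gt_0_iff)
    moreover have "card T' \<le> card A"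
      using T'(2) assms(1) card_mono by blast
    ultimately have "card A - card T' < card A - card T"
      using card_T' by simp
    then have IH: "card (perp_in n a M T') * card T' \<le> card (perp_in n a M A) * card A"
      using less.hyps T' by blast
    have "v \<in> T'"
      using less.prems(1) by (auto simp: T'_def vsubgroup_def intro: image_eqI[where x = 0])
    then have "perp_in n a M T' = {m \<in> perp_in n a M T. bform n a m v = 0}"
      by (auto simp: perp_in_def T'_def bform_add_right)
    moreover have "finite (perp_in n a M T)" "vsubgroup (perp_in n a M T)"
      using assms(3,4) by (auto simp: perp_in_def vsubgroup_def bform_add_left)
    ultimately have "card (perp_in n a M T) \<le> 2 * card (perp_in n a M T')"
      using card_le_twice_card_perp by metis
    then have "card (perp_in n a M T) * card T \<le> card (perp_in n a M T') * card T'"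
      using card_T' by simp
    then show ?thesis
      using IH by linarith
  qed simp
qed

lemma typeX_iff:
  assumes S: "proj_subspace n S" "S \<subseteq> quadric n a"
  shows "x \<in> typeX n a S \<longleftrightarrow> x \<in> quadric n a \<and> x \<notin> S \<and> (\<forall>t\<in>S. bform n a x t = 0)"
proof
  assume x: "x \<in> typeX n a S"
  then have x': "x \<in> quadric n a" "x \<notin> S" and join: "join_pt S x \<subseteq> quadric n a"
    by (auto simp: typeX_def)
  have "bform n a x t = 0" if "t \<in> S" for t
  proof -
    have "x + t \<in> quadric n a" "t \<in> quadric n a"
      using join S(2) that by (auto simp: join_pt_def)
    then show ?thesis
      using x' by (simp add: quadric_iff qform_add)
  qed
  then show "x \<in> quadric n a \<and> x \<notin> S \<and> (\<forall>t\<in>S. bform n a x t = 0)"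
    using x' by blast
next
  assume x: "x \<in> quadric n a \<and> x \<notin> S \<and> (\<forall>t\<in>S. bform n a x t = 0)"
  then have "x + t \<in> quadric n a" if "t \<in> S" for t
    using that S(2) add_in_quadric by blast
  then show "x \<in> typeX n a S"
    using x S(2) by (auto simp: typeX_def join_pt_def)
qed

lemma typeX_translate:
  assumes S: "proj_subspace n S" "S \<subseteq> quadric n a" and t: "t \<in> S" and x: "x \<in> typeX n a S"
  shows "t + x \<in> typeX n a S"
proof -
  have x': "x \<in> quadric n a" "x \<notin> S" "\<forall>t\<in>S. bform n a x t = 0"
    using x typeX_iff[OF S] by auto
  then have "t + x \<in> quadric n a"
    using t S(2) by (metis add_in_quadric bform_commute subsetD)
  moreover have "t + x \<notin> S"
  proof
    assume "t + x \<in> S"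
    then have "t + (t + x) \<in> insert 0 S"
      using proj_subspace_vsubgroup[OF S(1)] t unfolding vsubgroup_def by blast
    then show False
      using x' by (auto simp: quadric_iff)
  qed
  moreover have "\<forall>t'\<in>S. bform n a (t + x) t' = 0"
    using bform_singular_subspace[OF S] t x' by (simp add: bform_add_left)
  ultimately show ?thesis
    using typeX_iff[OF S] by blast
qed

lemma finite_typeX: "finite (typeX n a S)"
  by (rule finite_subset[OF _ finite_vecs]) (auto simp: typeX_def quadric_iff)

lemma exists_singular_subspace_proj_index:
  assumes "subspace_of_dim n s S" "S \<subseteq> quadric n a"
  shows "\<exists>M. subspace_of_dim n (proj_index n a) M \<and> M \<subseteq> quadric n a"
proof -
  let ?P = "\<lambda>d. \<exists>S. subspace_of_dim n d S \<and> S \<subseteq> quadric n a"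
  have "?P s"
    using assms by blast
  moreover have "d \<le> card (vecs n)" if "?P d" for d
  proof -
    obtain S where S: "subspace_of_dim n d S"
      using \<open>?P d\<close> by blast
    have "S \<subseteq> vecs n"
      using S by (auto simp: subspace_of_dim_def proj_subspace_def pg_points_def)
    then have "card S \<le> card (vecs n)"
      by (rule card_mono[OF finite_vecs])
    moreover have "d < card S"
      using S less_exp[of "d + 1"] unfolding subspace_of_dim_def by linarith
    ultimately show ?thesis
      by linarith
  qed
  ultimately have "?P (Greatest ?P)"
    by (rule GreatestI_nat)
  then show ?thesis
    unfolding proj_index_def .
qed

text \<open>A singular subspace \<open>M\<close> of larger dimension than \<open>\<alpha>\<close> has a point outside \<open>\<alpha>\<close> orthogonal to
  \<open>\<alpha>\<close>: the counting lemma for \<open>T = \<alpha> \<inter> M\<close> and \<open>A = \<alpha>\<close> (both with \<open>0\<close> added) shows that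
  \<open>M \<inter> \<alpha>\<^sup>\<bottom>\<close> is larger than \<open>\<alpha> \<inter> M\<close>.\<close>

lemma typeX_nonempty:
  assumes \<alpha>: "subspace_of_dim n s \<alpha>" "\<alpha> \<subseteq> quadric n a"
    and M: "subspace_of_dim n g M" "M \<subseteq> quadric n a" and "s < g"
  shows "typeX n a \<alpha> \<noteq> {}"
proof -
  have p\<alpha>: "proj_subspace n \<alpha>" and pM: "proj_subspace n M"
    using \<alpha> M by (auto simp: subspace_of_dim_def)
  let ?A = "insert 0 \<alpha>" and ?M = "insert 0 M"
  let ?T = "?A \<inter> ?M"
  have groups: "vsubgroup ?A" "vsubgroup ?M" "vsubgroup ?T"
    using proj_subspace_vsubgroup[OF p\<alpha>] proj_subspace_vsubgroup[OF pM]
    unfolding vsubgroup_def by blast+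
  have finite: "finite ?A" "finite ?M" "finite ?T"
    using proj_subspace_finite p\<alpha> pM by auto
  have "perp_in n a ?M ?T = ?M"
    using bform_singular_subspace[OF pM M(2)] by (auto simp: perp_in_def)
  then have count: "card ?M * card ?T \<le> card (perp_in n a ?M ?A) * card ?A"
    using card_perp_in_mult_mono[where n = n and a = a, OF finite(1) groups(1) finite(2) groups(2,3) Int_lower1]
    by simp
  have "card ?A < card ?M"
    using card_insert_zero_subspace[OF \<alpha>(1)] card_insert_zero_subspace[OF M(1)] \<open>s < g\<close> by simp
  moreover have "0 < card ?T"
    using finite(3) by (auto simp: card_gt_0_iff)
  ultimately have "card ?T * card ?A < card ?M * card ?T"
    by (simp add: mult.commute)
  then have "card ?T * card ?A < card (perp_in n a ?M ?A) * card ?A"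
    using count by linarith
  then have "card ?T < card (perp_in n a ?M ?A)"
    using mult_less_cancel2 by blast
  then have "\<not> perp_in n a ?M ?A \<subseteq> ?T"
    using card_mono[OF finite(3)] leD by blast
  then obtain m where "m \<in> perp_in n a ?M ?A" "m \<notin> ?T"
    by blast
  then have "m \<in> typeX n a \<alpha>"
    using M(2) typeX_iff[OF p\<alpha> \<alpha>(2)] by (auto simp: perp_in_def)
  then show ?thesis
    by blast
qed

subsection \<open>The one-or-all property\<close>

text \<open>For an edge \<open>u v\<close> of a point-graph of a polar space, \<open>{u, v, w}\<close> is the line through \<open>u\<close> and
  \<open>v\<close>, and the threefold equivalence says that every further point is adjacent to an odd number
  of its points, i.e.\ to one or all of them.\<close>

definition one_or_all_graph :: "'v set \<Rightarrow> ('v \<Rightarrow> 'v \<Rightarrow> bool) \<Rightarrow> bool" where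
  "one_or_all_graph V E \<longleftrightarrow> (\<forall>u\<in>V. \<forall>v\<in>V. E u v \<longrightarrow> (\<exists>w\<in>V. E u w \<and> E v w \<and>
      (\<forall>z\<in>V - {u, v, w}. E z u \<longleftrightarrow> (E z v \<longleftrightarrow> E z w))))"

lemma one_or_all_graph_iso:
  assumes "graph_iso V E W F" "one_or_all_graph W F"
  shows "one_or_all_graph V E"
  unfolding one_or_all_graph_def
proof (intro ballI impI)
  obtain f where bij: "bij_betw f V W" and adj: "\<And>u v. u \<in> V \<Longrightarrow> v \<in> V \<Longrightarrow> E u v \<longleftrightarrow> F (f u) (f v)"
    using assms(1) by (auto simp: graph_iso_def)
  fix u v
  assume u: "u \<in> V" and v: "v \<in> V" and "E u v"
  then have "F (f u) (f v)" "f u \<in> W" "f v \<in> W"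
    using adj bij_betw_apply[OF bij] by auto
  then obtain w' where w': "w' \<in> W" "F (f u) w'" "F (f v) w'"
    and odd: "\<And>z. z \<in> W - {f u, f v, w'} \<Longrightarrow> F z (f u) \<longleftrightarrow> (F z (f v) \<longleftrightarrow> F z w')"
    using assms(2) unfolding one_or_all_graph_def by metis
  obtain w where w: "w \<in> V" "f w = w'"
    using w'(1) bij_betw_imp_surj_on[OF bij] by blast
  show "\<exists>w\<in>V. E u w \<and> E v w \<and> (\<forall>z\<in>V - {u, v, w}. E z u \<longleftrightarrow> (E z v \<longleftrightarrow> E z w))"
  proof (intro bexI[OF _ w(1)] conjI ballI)
    show "E u w" "E v w"
      using adj[OF u w(1)] adj[OF v w(1)] w' w(2) by simp_all
    fix z
    assume z: "z \<in> V - {u, v, w}"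
    then have "f z \<in> W - {f u, f v, w'}"
      using u v w bij_betw_apply[OF bij] inj_on_eq_iff[OF bij_betw_imp_inj_on[OF bij]] by auto
    then show "E z u \<longleftrightarrow> (E z v \<longleftrightarrow> E z w)"
      using odd z adj[of z] u v w by simp
  qed
qed

lemma one_or_all_point_graph: "one_or_all_graph (quadric n a) (qadj n a)"
  unfolding one_or_all_graph_def
proof (intro ballI impI)
  fix u v
  assume u: "u \<in> quadric n a" and v: "v \<in> quadric n a" and uv: "qadj n a u v"
  then have w: "u + v \<in> quadric n a" "u \<noteq> v" "bform n a u v = 0"
    using qadj_iff[OF u v] by (auto simp: qadj_def)
  then have "u \<noteq> u + v" "v \<noteq> u + v"
    using u v by (auto simp: quadric_iff fun_eq_iff)
  then have "qadj n a u (u + v)" "qadj n a v (u + v)"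
    using qadj_iff[OF u w(1)] qadj_iff[OF v w(1)] w by (simp_all add: bform_add_right bform_commute)
  moreover have "qadj n a z u \<longleftrightarrow> (qadj n a z v \<longleftrightarrow> qadj n a z (u + v))"
    if "z \<in> quadric n a - {u, v, u + v}" for z
    using that qadj_iff[OF _ u, of z] qadj_iff[OF _ v, of z] qadj_iff[OF _ w(1), of z]
    by (cases "bform n a z u"; cases "bform n a z v") (simp_all add: bform_add_right)
  ultimately show "\<exists>w\<in>quadric n a. qadj n a u w \<and> qadj n a v w \<and>
      (\<forall>z\<in>quadric n a - {u, v, w}. qadj n a z u \<longleftrightarrow> (qadj n a z v \<longleftrightarrow> qadj n a z w))"
    using w(1) by blast
qed

subsection \<open>Switching\<close>

lemma switched_notin_typeX: "switched n a S R \<Longrightarrow> R \<notin> typeX n a S"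
  by (simp add: switched_def typeY_def)

lemma adj_s_iff:
  assumes "u \<in> quadric n a" "v \<in> quadric n a"
  shows "adj_s n a S u v \<longleftrightarrow> u \<noteq> v \<and> (bform n a u v = 0 \<longleftrightarrow>
    \<not> (switched n a S u \<and> v \<in> typeX n a S \<or> switched n a S v \<and> u \<in> typeX n a S))"
  using qadj_iff[OF assms] switched_notin_typeX[of n a S u] switched_notin_typeX[of n a S v]
  unfolding adj_s_def by auto

lemma adj_s_switched:
  assumes "switched n a S z" "z \<in> quadric n a" "v \<in> quadric n a"
  shows "adj_s n a S z v \<longleftrightarrow> z \<noteq> v \<and> (bform n a z v = 0 \<longleftrightarrow> v \<notin> typeX n a S)"
  using adj_s_iff[OF assms(2,3)] assms(1) switched_notin_typeX by metis

lemma adj_s_typeX: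
  assumes "x \<in> typeX n a S" "x \<in> quadric n a" "v \<in> quadric n a"
  shows "adj_s n a S x v \<longleftrightarrow> x \<noteq> v \<and> (bform n a x v = 0 \<longleftrightarrow> \<not> switched n a S v)"
  using adj_s_iff[OF assms(2,3)] assms(1) switched_notin_typeX by metis

context
  fixes n :: nat and a :: "nat \<Rightarrow> nat \<Rightarrow> bit" and \<alpha> :: "(nat \<Rightarrow> bit) set"
  assumes subspace: "proj_subspace n \<alpha>" and singular: "\<alpha> \<subseteq> quadric n a"
    and typeX_ne: "typeX n a \<alpha> \<noteq> {}"
begin

text \<open>Translation by a point \<open>t \<in> \<alpha>\<close> with \<open>B(R,t) = 1\<close> maps the type (ii) neighbours of \<open>R\<close> onto
  its type (ii) non-neighbours.\<close>

lemma switched_iff: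
  assumes R: "R \<in> quadric n a"
  shows "switched n a \<alpha> R \<longleftrightarrow> (\<exists>t\<in>\<alpha>. bform n a R t = 1)"
proof
  assume sw: "switched n a \<alpha> R"
  show "\<exists>t\<in>\<alpha>. bform n a R t = 1"
  proof (rule ccontr)
    assume "\<not> (\<exists>t\<in>\<alpha>. bform n a R t = 1)"
    then have "R \<in> \<alpha>"
      using R switched_notin_typeX[OF sw] typeX_iff[OF subspace singular] by auto
    then have "qadj n a R x" if "x \<in> typeX n a \<alpha>" for x
      using that R typeX_iff[OF subspace singular] qadj_iff bform_commute by metis
    then have "{x \<in> typeX n a \<alpha>. qadj n a R x} = typeX n a \<alpha>"
      by blast
    then have "2 * card (typeX n a \<alpha>) = card (typeX n a \<alpha>)"
      using sw by (simp add: switched_def)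
    then show False
      using typeX_ne finite_typeX by simp
  qed
next
  assume "\<exists>t\<in>\<alpha>. bform n a R t = 1"
  then obtain t where t: "t \<in> \<alpha>" "bform n a R t = 1"
    by blast
  let ?X = "typeX n a \<alpha>"
  let ?Adj = "{x \<in> ?X. bform n a R x = 0}" and ?Nonadj = "{x \<in> ?X. bform n a R x = 1}"
  have "R \<notin> ?X"
    using typeX_iff[OF subspace singular] t by auto
  then have nbrs: "{x \<in> ?X. qadj n a R x} = ?Adj"
    using R qadj_iff[OF R] by (auto simp: typeX_def)
  have shift: "bform n a R (t + x) = 1 + bform n a R x" for x
    using t by (simp add: bform_add_right)
  have "bij_betw ((+) t) ?Adj ?Nonadj"
    by (rule bij_betw_byWitness[where f' = "(+) t"])
      (use typeX_translate[OF subspace singular t(1)] shift in auto)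
  then have "card ?Adj = card ?Nonadj"
    by (rule bij_betw_same_card)
  moreover have "card (?Adj \<union> ?Nonadj) = card ?Adj + card ?Nonadj"
    by (rule card_Un_disjoint) (use finite_typeX[of n a \<alpha>] in auto)
  moreover have "?Adj \<union> ?Nonadj = ?X"
    by auto
  ultimately show "switched n a \<alpha> R"
    using \<open>R \<notin> ?X\<close> R nbrs by (simp add: switched_def typeY_def)
qed

lemma not_switched_alpha: "t \<in> \<alpha> \<Longrightarrow> \<not> switched n a \<alpha> t"
  using singular switched_iff bform_singular_subspace[OF subspace singular] by fastforce

lemma adj_s_alpha:
  assumes "t \<in> \<alpha>" "v \<in> quadric n a"
  shows "adj_s n a \<alpha> t v \<longleftrightarrow> t \<noteq> v \<and> bform n a t v = 0"
  using adj_s_iff[of t n a v] assms singular not_switched_alpha typeX_iff[OF subspace singular]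
  by auto

lemma exists_switched_point_bform_ones:
  assumes ns: "nonsingular n a" and two: "2 \<le> card \<alpha>" and x: "x \<in> typeX n a \<alpha>"
    and u: "u \<in> quadric n a" and w: "w \<in> quadric n a" and uw: "u \<noteq> w" "bform n a u w = 0"
    and ux: "bform n a u x = 1" and xw: "bform n a x w = 1"
    and same: "\<And>t. t \<in> \<alpha> \<Longrightarrow> bform n a t u = bform n a t w"
  shows "\<exists>z\<in>quadric n a - {u, x, w}. switched n a \<alpha> z \<and> bform n a z x = 1 \<and> bform n a z (u + w) = 1"
proof -
  define e where "e = u + w"
  have x': "x \<in> quadric n a" "x \<notin> \<alpha>" "\<And>t. t \<in> \<alpha> \<Longrightarrow> bform n a t x = 0"
    using x typeX_iff[OF subspace singular] bform_commute by metis+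
  have e: "e \<in> quadric n a"
    unfolding e_def using add_in_quadric[OF u w uw] .
  have e_perp: "bform n a t e = 0" if "t \<in> \<alpha>" for t
    using same[OF that] by (simp add: e_def bform_add_right)
  have xe: "bform n a x e = 0"
    using ux xw bform_commute[of n a u x] by (simp add: e_def bform_add_right)
  have "x \<noteq> e"
  proof
    assume "x = e"
    then have "qform n a w = qform n a u + qform n a x + bform n a u x"
      by (simp add: e_def qform_add[symmetric] add.assoc[symmetric])
    then show False
      using u w x' ux by (simp add: quadric_iff)
  qed
  obtain t where t: "t \<in> \<alpha>" "t \<noteq> x + e"
    using two by (metis card_le_Suc0_iff_eq not_less_eq_eq numeral_2_eq_2 proj_subspace_finite subspace)
  obtain z where z: "z \<in> quadric n a" "bform n a z t = 1" "bform n a z x = 1" "bform n a z e = 1"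
    using exists_quadric_point_bform_ones3[OF ns _ x'(1) e \<open>x \<noteq> e\<close> xe t(2) x'(3) e_perp] t singular
    by blast
  have "z \<noteq> u" "z \<noteq> w"
    using z(4) uw(2) bform_commute[of n a w u] by (auto simp: e_def bform_add_right)
  moreover have "z \<noteq> x"
    using z(3) by auto
  moreover have "switched n a \<alpha> z"
    using switched_iff[OF z(1)] z(2) t(1) by blast
  ultimately show ?thesis
    using z by (auto simp: e_def)
qed

lemma adj_s_violates_one_or_all:
  assumes ns: "nonsingular n a" and two: "2 \<le> card \<alpha>" and x: "x \<in> typeX n a \<alpha>"
    and t0: "t0 \<in> \<alpha>" and u: "u \<in> quadric n a" "bform n a u t0 = 1" "bform n a u x = 1"
    and w: "w \<in> quadric n a" "adj_s n a \<alpha> u w" "adj_s n a \<alpha> x w"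
  shows "\<exists>z\<in>quadric n a - {u, x, w}.
    \<not> (adj_s n a \<alpha> z u \<longleftrightarrow> (adj_s n a \<alpha> z x \<longleftrightarrow> adj_s n a \<alpha> z w))"
proof -
  let ?Q = "quadric n a" and ?X = "typeX n a \<alpha>" and ?adj = "adj_s n a \<alpha>"
  have x': "x \<in> ?Q" "x \<notin> \<alpha>" "\<And>t. t \<in> \<alpha> \<Longrightarrow> bform n a t x = 0"
    using x typeX_iff[OF subspace singular] bform_commute by metis+
  have u_sw: "switched n a \<alpha> u"
    using switched_iff u t0 by blast
  show ?thesis
  proof (cases "switched n a \<alpha> w")
    case False
    \<comment> \<open>\<open>t0\<close> is adjacent to \<open>x\<close> and \<open>w\<close> but not to \<open>u\<close>\<close>
    then have "bform n a t0 w = 0"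
      using switched_iff[OF w(1)] t0 bform_commute by fastforce
    moreover have "t0 \<noteq> w"
      using w(2) adj_s_switched[OF u_sw u(1) w(1)] u(2) t0 typeX_iff[OF subspace singular] by auto
    moreover have "t0 \<noteq> u" "t0 \<noteq> x"
      using u_sw not_switched_alpha t0 x'(2) by auto
    ultimately show ?thesis
      using adj_s_alpha[OF t0] t0 singular u(1,2) x'(1,3) w(1) bform_commute[of n a t0 u]
      by (intro bexI[of _ t0]) auto
  next
    case w_sw: True
    then have uw: "u \<noteq> w" "bform n a u w = 0"
      using adj_s_switched[OF u_sw u(1) w(1)] w(2) switched_notin_typeX by auto
    have xw: "bform n a x w = 1"
      using adj_s_typeX[OF x x'(1) w(1)] w(3) w_sw by auto
    have u_w_notin: "u \<notin> \<alpha>" "u \<notin> ?X" "w \<notin> \<alpha>" "w \<notin> ?X"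
      using u_sw w_sw not_switched_alpha switched_notin_typeX by blast+
    show ?thesis
    proof (cases "\<exists>t\<in>\<alpha>. bform n a t u \<noteq> bform n a t w")
      case True
      \<comment> \<open>such a \<open>t\<close> is adjacent to \<open>x\<close> and to exactly one of \<open>u\<close>, \<open>w\<close>\<close>
      then obtain t where t: "t \<in> \<alpha>" "bform n a t u \<noteq> bform n a t w"
        by blast
      have "t \<in> ?Q - {u, x, w}"
        using t singular u_w_notin x'(2) by auto
      moreover have "adj_s n a \<alpha> t x"
        using adj_s_alpha[OF t(1) x'(1)] x'(3) t \<open>t \<in> ?Q - {u, x, w}\<close> by simp
      moreover have "adj_s n a \<alpha> t u \<longleftrightarrow> \<not> adj_s n a \<alpha> t w"
        using adj_s_alpha[OF t(1) u(1)] adj_s_alpha[OF t(1) w(1)] t \<open>t \<in> ?Q - {u, x, w}\<close>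
        by (cases "bform n a t u"; cases "bform n a t w") simp_all
      ultimately show ?thesis
        by blast
    next
      case False
      \<comment> \<open>the switched point \<open>z\<close> is adjacent to \<open>x\<close> and to exactly one of \<open>u\<close>, \<open>w\<close>\<close>
      then obtain z where z: "z \<in> ?Q - {u, x, w}" "switched n a \<alpha> z"
        "bform n a z x = 1" "bform n a z (u + w) = 1"
        using exists_switched_point_bform_ones[OF ns two x u(1) w(1) uw u(3) xw] by blast
      moreover have "adj_s n a \<alpha> z x" "adj_s n a \<alpha> z u \<longleftrightarrow> \<not> adj_s n a \<alpha> z w"
      proof -
        have "z \<in> ?Q" "z \<noteq> u" "z \<noteq> x" "z \<noteq> w"
          using z(1) by auto
        moreover have "bform n a z w = 1 + bform n a z u"
          using z(4) by (cases "bform n a z u"; cases "bform n a z w") (simp_all add: bform_add_right)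
        ultimately show "adj_s n a \<alpha> z x" "adj_s n a \<alpha> z u \<longleftrightarrow> \<not> adj_s n a \<alpha> z w"
          using adj_s_switched[OF z(2) _ u(1)] adj_s_switched[OF z(2) _ x'(1)]
            adj_s_switched[OF z(2) _ w(1)] z(3) x u_w_notin(2,4)
          by (cases "bform n a z u"; simp)+
      qed
      ultimately show ?thesis
        by blast
    qed
  qed
qed

lemma not_one_or_all_adj_s:
  assumes ns: "nonsingular n a" and two: "2 \<le> card \<alpha>"
  shows "\<not> one_or_all_graph (quadric n a) (adj_s n a \<alpha>)"
proof
  assume one_or_all: "one_or_all_graph (quadric n a) (adj_s n a \<alpha>)"
  obtain x where x: "x \<in> typeX n a \<alpha>"
    using typeX_ne by blast
  then have x': "x \<in> quadric n a" "x \<notin> \<alpha>" "\<And>t. t \<in> \<alpha> \<Longrightarrow> bform n a t x = 0"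
    using typeX_iff[OF subspace singular] bform_commute by metis+
  obtain t0 where t0: "t0 \<in> \<alpha>"
    using two by fastforce
  then obtain u where u: "u \<in> quadric n a" "bform n a u t0 = 1" "bform n a u x = 1"
    using exists_quadric_point_bform_one_value[OF ns _ x'(1) _ x'(3)] x'(2) singular by blast
  moreover have "switched n a \<alpha> u"
    using switched_iff u t0 by blast
  ultimately have "adj_s n a \<alpha> u x"
    using adj_s_switched[OF _ u(1) x'(1)] x by auto
  then obtain w where "w \<in> quadric n a" "adj_s n a \<alpha> u w" "adj_s n a \<alpha> x w"
    and "\<forall>z\<in>quadric n a - {u, x, w}.
      adj_s n a \<alpha> z u \<longleftrightarrow> (adj_s n a \<alpha> z x \<longleftrightarrow> adj_s n a \<alpha> z w)"
    using one_or_all u(1) x'(1) unfolding one_or_all_graph_def by metis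
  then show False
    using adj_s_violates_one_or_all[OF ns two x t0 u] by blast
qed

lemma adj_s_alpha_point:
  assumes "\<alpha> = {P}" "u \<in> quadric n a" "v \<in> quadric n a"
  shows "adj_s n a \<alpha> u v \<longleftrightarrow> u \<noteq> v \<and> (bform n a u v = 0 \<longleftrightarrow>
    \<not> (bform n a u P = 1 \<and> v \<in> typeX n a \<alpha> \<or> bform n a v P = 1 \<and> u \<in> typeX n a \<alpha>))"
  using adj_s_iff[OF assms(2,3)] switched_iff[OF assms(2)] switched_iff[OF assms(3)] assms(1)
  by (cases "bform n a u P"; cases "bform n a v P") simp_all

text \<open>For \<open>\<alpha> = {P}\<close>, translating the type (ii) points by \<open>P\<close> undoes the switching.\<close>

lemma graph_iso_adj_s_point:
  assumes \<alpha>: "\<alpha> = {P}"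
  shows "graph_iso (quadric n a) (adj_s n a \<alpha>) (quadric n a) (qadj n a)"
proof -
  let ?Q = "quadric n a" and ?X = "typeX n a \<alpha>"
  have X: "x \<in> ?X \<longleftrightarrow> x \<in> ?Q \<and> x \<noteq> P \<and> bform n a x P = 0" for x
    using typeX_iff[OF subspace singular] \<alpha> by auto
  have X_shift: "x + P \<in> ?X" if "x \<in> ?X" for x
    using typeX_translate[OF subspace singular _ that, of P] \<alpha> by (simp add: add.commute)
  define f where "f v = (if v \<in> ?X then v + P else v)" for v
  have f_f: "f (f v) = v" for v
    using X_shift by (simp add: f_def)
  have f_Q: "f v \<in> ?Q" if "v \<in> ?Q" for v
    using X_shift that X by (simp add: f_def)
  have "bij_betw f ?Q ?Q"
    by (rule bij_betw_byWitness[where f' = f]) (use f_f f_Q in auto)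
  moreover have "adj_s n a \<alpha> u v \<longleftrightarrow> qadj n a (f u) (f v)" if u: "u \<in> ?Q" and v: "v \<in> ?Q" for u v
  proof -
    have "f u \<noteq> f v \<longleftrightarrow> u \<noteq> v"
      using f_f by metis
    moreover have "bform n a (f u) (f v) = bform n a u v
        + (if u \<in> ?X then bform n a P v else 0) + (if v \<in> ?X then bform n a u P else 0)"
      using X by (auto simp: f_def bform_add_left bform_add_right bform_commute[of n a P])
    ultimately show ?thesis
      using adj_s_alpha_point[OF \<alpha> u v] qadj_iff[OF f_Q[OF u] f_Q[OF v]] X[of u] X[of v] u v
      by (cases "bform n a u v"; cases "bform n a u P"; cases "bform n a v P")
        (auto simp: bform_commute[of n a P])
  qed
  ultimately show ?thesis
    unfolding graph_iso_def by blast
qed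

end

theorem theorem6p1:
  fixes n g s :: nat and a :: "nat \<Rightarrow> nat \<Rightarrow> bit" and \<alpha> :: "(nat \<Rightarrow> bit) set"
  assumes "nonsingular n a"
    and "g = proj_index n a"
    and "g \<ge> 1"
    and "s < g"
    and "subspace_of_dim n s \<alpha>"
    and "\<alpha> \<subseteq> quadric n a"
  shows "graph_iso (quadric n a) (adj_s n a \<alpha>) (quadric n a) (qadj n a) \<longleftrightarrow> s = 0"
proof -
  have \<alpha>: "proj_subspace n \<alpha>" "card \<alpha> = 2 ^ (s + 1) - 1"
    using assms(5) by (auto simp: subspace_of_dim_def)
  obtain M where "subspace_of_dim n g M" "M \<subseteq> quadric n a"
    using exists_singular_subspace_proj_index[OF assms(5,6)] assms(2) by blast
  then have X: "typeX n a \<alpha> \<noteq> {}"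
    using typeX_nonempty[OF assms(5,6)] assms(4) by blast
  show ?thesis
  proof (cases "s = 0")
    case True
    then obtain P where "\<alpha> = {P}"
      using \<alpha>(2) card_1_singletonE by auto
    then show ?thesis
      using graph_iso_adj_s_point[OF \<alpha>(1) assms(6) X] True by blast
  next
    case False
    then have "2 ^ 2 \<le> card \<alpha> + 1"
      using \<alpha>(2) power_increasing[of 2 "s + 1" "2 :: nat"] by simp
    then have "\<not> one_or_all_graph (quadric n a) (adj_s n a \<alpha>)"
      using not_one_or_all_adj_s[OF \<alpha>(1) assms(6) X assms(1)] by simp
    then show ?thesis
      using one_or_all_graph_iso one_or_all_point_graph False by blast
  qed
qed

end
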